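(* Let $l^1,\dots,l^T\in[0,1]^N$ be an arbitrary (adversarial) sequence of loss vectors, let $w^1\in\Delta^N$ have all entries positive, let $0<\eta<1$, and define $$w^{t+1}=w^t\odot\big(\mathbb{1}-\eta\,\Pi_{w^t} l^t\big),\qquad (\Pi_{w^t}l^t)_i=l^t_i-w^t\cdot l^t.$$ Then for every $u\in\Delta^N$, $$\sum_{t=1}^T w^t\cdot l^t-\sum_{t=1}^T u\cdot l^t\le \frac{D(u\,|\,w^1)}{\eta}+\frac{T\eta}{2(1-\eta)}.$$ In particular, taking $w^1=(1/N,\ldots,1/N)$ and $\eta=\frac{\sqrt{2\log N}}{\sqrt{2\log N}+\sqrt{T}}$ gives, for every $u\in\Delta^N$, $$\sum_{t=1}^T w^t\cdot l^t-\sum_{t=1}^T u\cdot l^t\le\sqrt{2T\log N}+\log N,$$ and this holds in particular for $u=e_j$, where $j$ is the best expert (minimizing $\sum_t l^t_j$) and $e_j$ is the standard basis vector.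
   Context: $\Delta^N=\{w\in\mathbb{R}^N : \sum_i w_i=1,\ w_i\ge 0\}$; $\odot$ is componentwise multiplication and $\mathbb{1}$ the all-ones vector. The relative entropy is $D(u\,|\,w)=\sum_{i:\,u_i\ne0}u_i\log(u_i/w_i)$. *)

theory Defs
  imports Complex_Main
begin

text \<open>Vectors in R^N are modelled as functions nat => real; only indices i < N matter.\<close>

definition simplex :: "nat \<Rightarrow> (nat \<Rightarrow> real) set" where
  "simplex N = {w. (\<forall>i<N. 0 \<le> w i) \<and> (\<Sum>i<N. w i) = 1}"

definition dotN :: "nat \<Rightarrow> (nat \<Rightarrow> real) \<Rightarrow> (nat \<Rightarrow> real) \<Rightarrow> real" where
  "dotN N a b = (\<Sum>i<N. a i * b i)"

definition relent :: "nat \<Rightarrow> (nat \<Rightarrow> real) \<Rightarrow> (nat \<Rightarrow> real) \<Rightarrow> real" where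
  "relent N u w = (\<Sum>i\<in>{i. i < N \<and> u i \<noteq> 0}. u i * ln (u i / w i))"

text \<open>Weights: mw N eta l w1 t is w^(t+1) of the paper (time shifted to start at 0);
  l t is the loss vector l^(t+1).\<close>
fun mw :: "nat \<Rightarrow> real \<Rightarrow> (nat \<Rightarrow> nat \<Rightarrow> real) \<Rightarrow> (nat \<Rightarrow> real) \<Rightarrow> nat \<Rightarrow> nat \<Rightarrow> real" where
  "mw N eta l w1 0 = w1"
| "mw N eta l w1 (Suc t) =
     (\<lambda>i. mw N eta l w1 t i * (1 - eta * (l t i - dotN N (mw N eta l w1 t) (l t))))"

end

theory Submission
  imports Defs
begin

text \<open>The relative entropy D(u | w^t) is a potential: one multiplicative step lowers it by
  eta (w^t \<cdot> l^t - u \<cdot> l^t) up to the second-order term eta^2 / (2 (1 - eta)), which comes from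
  -ln (1 - y) \<le> y + y^2 / (2 (1 - eta)) for |y| \<le> eta. Telescoping over T rounds and using
  D \<ge> 0 gives the regret bound. For uniform w^1 we have D(u | w^1) \<le> ln N, and the stated eta
  balances ln N / eta against T eta / (2 (1 - eta)).\<close>

lemma minus_ln_one_minus_le:
  fixes eta y :: real
  assumes eta: "eta < 1" and y: "\<bar>y\<bar> \<le> eta"
  shows "- ln (1 - y) \<le> y + y\<^sup>2 / (2 * (1 - eta))"
proof -
  define f where "f z = ln (1 - z) + z + z\<^sup>2 / (2 * (1 - eta))" for z
  have f': "(f has_real_derivative z * (1 / (1 - eta) - 1 / (1 - z))) (at z)" if "z \<le> eta" for z
  proof -
    have "z < 1" "0 < 1 - z" "0 < 1 - eta" using that eta by auto
    then have "(f has_real_derivative 1 / (1 - z) * (0 - 1) + 1 + 2 * z / (2 * (1 - eta))) (at z)"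
      unfolding f_def by (force intro!: derivative_eq_intros simp: power2_eq_square)
    moreover have "1 / (1 - z) * (0 - 1) + 1 + 2 * z / (2 * (1 - eta))
        = z * (1 / (1 - eta) - 1 / (1 - z))"
      using \<open>0 < 1 - z\<close> \<open>0 < 1 - eta\<close> by (simp add: divide_simps) (simp add: algebra_simps)
    ultimately show ?thesis by simp
  qed
  \<comment> \<open>f' z has the sign of z, so f attains its minimum 0 at z = 0.\<close>
  have bracket: "0 \<le> 1 / (1 - eta) - 1 / (1 - z)" if "z \<le> eta" for z
    using that eta by (simp add: frac_le)
  have "f 0 \<le> f y"
  proof (cases "0 \<le> y")
    case True
    show ?thesis
    proof (rule DERIV_nonneg_imp_nondecreasing[OF True])
      fix z assume "0 \<le> z" "z \<le> y"
      with y have "z \<le> eta" by linarith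
      then show "\<exists>d. (f has_real_derivative d) (at z) \<and> 0 \<le> d"
        using f' bracket \<open>0 \<le> z\<close> by (blast intro: mult_nonneg_nonneg)
    qed
  next
    case False
    show ?thesis
    proof (rule DERIV_nonpos_imp_nonincreasing[of y 0 f])
      show "y \<le> 0" using False by simp
      fix z assume "y \<le> z" "z \<le> 0"
      with y have "z \<le> eta" by linarith
      then show "\<exists>d. (f has_real_derivative d) (at z) \<and> d \<le> 0"
        using f' bracket \<open>z \<le> 0\<close> by (blast intro: mult_nonpos_nonneg)
    qed
  qed
  then show ?thesis by (simp add: f_def)
qed

lemma simplex_nonneg: "w \<in> simplex N \<Longrightarrow> i < N \<Longrightarrow> 0 \<le> w i"
  by (simp add: simplex_def)

lemma simplex_sum: "w \<in> simplex N \<Longrightarrow> (\<Sum>i<N. w i) = 1"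
  by (simp add: simplex_def)

lemma simplex_le_one:
  assumes "w \<in> simplex N" "i < N"
  shows "w i \<le> 1"
proof -
  have "w i \<le> (\<Sum>i<N. w i)"
    using assms by (intro member_le_sum) (auto simp: simplex_nonneg)
  then show ?thesis using simplex_sum[OF assms(1)] by simp
qed

lemma unit_vector_in_simplex: "j < N \<Longrightarrow> (\<lambda>i. if i = j then 1 else 0) \<in> simplex N"
  by (simp add: simplex_def)

lemma dotN_simplex_bounds:
  assumes w: "w \<in> simplex N" and v: "\<forall>i<N. 0 \<le> v i \<and> v i \<le> 1"
  shows "0 \<le> dotN N w v" "dotN N w v \<le> 1"
proof -
  show "0 \<le> dotN N w v"
    unfolding dotN_def using v simplex_nonneg[OF w] by (intro sum_nonneg) auto
  have "dotN N w v \<le> (\<Sum>i<N. w i)"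
    unfolding dotN_def using v simplex_nonneg[OF w] by (intro sum_mono) (auto intro: mult_left_le)
  then show "dotN N w v \<le> 1" using simplex_sum[OF w] by simp
qed

lemma relent_eq_sum: "relent N u w = (\<Sum>i<N. u i * ln (u i / w i))"
  unfolding relent_def by (rule sum.mono_neutral_left) auto

lemma relent_nonneg:
  assumes u: "u \<in> simplex N" and w: "w \<in> simplex N" and w_pos: "\<forall>i<N. 0 < w i"
  shows "0 \<le> relent N u w"
proof -
  have "u i - w i \<le> u i * ln (u i / w i)" if i: "i < N" for i
  proof (cases "u i = 0")
    case True
    then show ?thesis using w_pos i by (simp add: less_imp_le)
  next
    case False
    then have "0 < u i" "0 < w i" using simplex_nonneg[OF u i] w_pos i by auto
    then have "ln (w i / u i) \<le> w i / u i - 1" by (intro ln_le_minus_one) simp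
    moreover have "ln (u i / w i) = - ln (w i / u i)"
      using \<open>0 < u i\<close> \<open>0 < w i\<close> by (simp add: ln_div)
    ultimately have "u i * (1 - w i / u i) \<le> u i * ln (u i / w i)"
      using \<open>0 < u i\<close> by (intro mult_left_mono) auto
    then show ?thesis using \<open>0 < u i\<close> by (simp add: algebra_simps)
  qed
  then have "(\<Sum>i<N. u i - w i) \<le> relent N u w"
    unfolding relent_eq_sum by (intro sum_mono) auto
  then show ?thesis by (simp add: sum_subtractf simplex_sum[OF u] simplex_sum[OF w])
qed

lemma relent_uniform_le_ln:
  assumes u: "u \<in> simplex N"
  shows "relent N u (\<lambda>i. 1 / real N) \<le> ln (real N)"
proof -
  have "u i * ln (u i / (1 / real N)) \<le> u i * ln (real N)" if i: "i < N" for i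
  proof (cases "u i = 0")
    case False
    then have "0 < u i" using simplex_nonneg[OF u i] by simp
    moreover have "0 < real N" using i by simp
    moreover have "u i * real N \<le> real N"
      using simplex_le_one[OF u i] simplex_nonneg[OF u i] by (simp add: mult_left_le_one_le)
    ultimately show ?thesis by (intro mult_left_mono) auto
  qed simp
  then have "relent N u (\<lambda>i. 1 / real N) \<le> (\<Sum>i<N. u i * ln (real N))"
    unfolding relent_eq_sum by (intro sum_mono) auto
  also have "\<dots> = ln (real N)" by (simp add: sum_distrib_right[symmetric] simplex_sum[OF u])
  finally show ?thesis .
qed

definition mw_update :: "nat \<Rightarrow> real \<Rightarrow> (nat \<Rightarrow> real) \<Rightarrow> (nat \<Rightarrow> real) \<Rightarrow> nat \<Rightarrow> real" where
  "mw_update N eta v w = (\<lambda>i. w i * (1 - eta * (v i - dotN N w v)))"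

lemma mw_Suc: "mw N eta l w1 (Suc t) = mw_update N eta (l t) (mw N eta l w1 t)"
  by (simp add: mw_update_def)

lemma abs_centred_loss_le:
  assumes "w \<in> simplex N" "\<forall>i<N. 0 \<le> v i \<and> v i \<le> 1" "i < N"
  shows "\<bar>v i - dotN N w v\<bar> \<le> 1"
  using assms dotN_simplex_bounds[OF assms(1,2)] by force

lemma mw_update_factor_pos:
  assumes "w \<in> simplex N" "\<forall>i<N. 0 \<le> v i \<and> v i \<le> 1" "i < N" "0 \<le> eta" "eta < 1"
  shows "0 < 1 - eta * (v i - dotN N w v)"
proof -
  have "eta * (v i - dotN N w v) \<le> eta * 1"
    using abs_centred_loss_le[OF assms(1-3)] assms(4) by (intro mult_left_mono) auto
  then show ?thesis using assms(5) by linarith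
qed

lemma mw_update_pos:
  assumes "w \<in> simplex N" "\<forall>i<N. 0 < w i" "\<forall>i<N. 0 \<le> v i \<and> v i \<le> 1" "0 \<le> eta" "eta < 1"
  shows "\<forall>i<N. 0 < mw_update N eta v w i"
  using assms mw_update_factor_pos[OF assms(1,3)] by (simp add: mw_update_def)

lemma mw_update_in_simplex:
  assumes w: "w \<in> simplex N" "\<forall>i<N. 0 < w i" and v: "\<forall>i<N. 0 \<le> v i \<and> v i \<le> 1"
    and eta: "0 \<le> eta" "eta < 1"
  shows "mw_update N eta v w \<in> simplex N"
proof -
  have "(\<Sum>i<N. mw_update N eta v w i)
      = (\<Sum>i<N. w i) - eta * (\<Sum>i<N. w i * v i) + eta * dotN N w v * (\<Sum>i<N. w i)"
    by (simp add: mw_update_def algebra_simps sum_subtractf sum.distrib sum_distrib_left)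
  also have "\<dots> = 1" by (simp add: simplex_sum[OF w(1)] dotN_def)
  finally show ?thesis
    using mw_update_pos[OF w v eta] by (auto simp: simplex_def less_imp_le)
qed

lemma mw_in_simplex_pos:
  assumes loss: "\<And>t i. t < T \<Longrightarrow> i < N \<Longrightarrow> 0 \<le> l t i \<and> l t i \<le> 1"
    and w1: "w1 \<in> simplex N" "\<forall>i<N. 0 < w1 i" and eta: "0 \<le> eta" "eta < 1"
    and "t \<le> T"
  shows "mw N eta l w1 t \<in> simplex N \<and> (\<forall>i<N. 0 < mw N eta l w1 t i)"
  using \<open>t \<le> T\<close>
proof (induction t)
  case (Suc t)
  then have "\<forall>i<N. 0 \<le> l t i \<and> l t i \<le> 1" using loss by simp
  with Suc show ?case
    unfolding mw_Suc using mw_update_in_simplex mw_update_pos eta by simp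
qed (use w1 in simp)

lemma relent_mw_update_le:
  assumes u: "u \<in> simplex N" and w: "w \<in> simplex N" "\<forall>i<N. 0 < w i"
    and v: "\<forall>i<N. 0 \<le> v i \<and> v i \<le> 1" and eta: "0 \<le> eta" "eta < 1"
  shows "relent N u (mw_update N eta v w) - relent N u w
           \<le> eta * (dotN N u v - dotN N w v) + eta\<^sup>2 / (2 * (1 - eta))"
proof -
  define y where "y i = eta * (v i - dotN N w v)" for i
  define c where "c = eta\<^sup>2 / (2 * (1 - eta))"
  have y_le: "\<bar>y i\<bar> \<le> eta" if "i < N" for i
    using abs_centred_loss_le[OF w(1) v that] eta by (simp add: y_def abs_mult mult_left_le)
  have "u i * ln (u i / mw_update N eta v w i) = u i * ln (u i / w i) + u i * (- ln (1 - y i))"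
    if i: "i < N" for i
  proof (cases "u i = 0")
    case False
    then have "0 < u i" using simplex_nonneg[OF u i] by simp
    moreover have "0 < w i" "0 < 1 - y i"
      using w(2) mw_update_factor_pos[OF w(1) v i eta] i by (auto simp: y_def)
    ultimately have ln_eq: "ln (u i / (w i * (1 - y i))) = ln (u i / w i) - ln (1 - y i)"
      by (simp add: ln_div ln_mult)
    have "mw_update N eta v w i = w i * (1 - y i)" by (simp add: mw_update_def y_def)
    then show ?thesis by (simp only: ln_eq) (simp add: algebra_simps)
  qed simp
  then have "relent N u (mw_update N eta v w) - relent N u w = (\<Sum>i<N. u i * (- ln (1 - y i)))"
    by (simp add: relent_eq_sum sum_subtractf sum_negf)
  also have "\<dots> \<le> (\<Sum>i<N. u i * (y i + c))"
  proof (intro sum_mono mult_left_mono)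
    fix i assume "i \<in> {..<N}"
    then have "\<bar>y i\<bar> \<le> eta" "0 \<le> u i" using y_le simplex_nonneg[OF u] by auto
    moreover from this have "(y i)\<^sup>2 \<le> eta\<^sup>2"
      using abs_le_square_iff[of "y i" eta] eta by simp
    then have "(y i)\<^sup>2 / (2 * (1 - eta)) \<le> c"
      unfolding c_def using eta by (intro divide_right_mono) auto
    ultimately show "- ln (1 - y i) \<le> y i + c" "0 \<le> u i"
      using minus_ln_one_minus_le[OF eta(2), of "y i"] by linarith+
  qed
  also have "\<dots> = eta * (\<Sum>i<N. u i * v i) - eta * dotN N w v * (\<Sum>i<N. u i) + c * (\<Sum>i<N. u i)"
    by (simp add: y_def algebra_simps sum.distrib sum_subtractf sum_distrib_left)
  also have "\<dots> = eta * (dotN N u v - dotN N w v) + c"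
    by (simp add: dotN_def simplex_sum[OF u] algebra_simps)
  finally show ?thesis unfolding c_def .
qed

lemma mw_regret_bound:
  assumes loss: "\<And>t i. t < T \<Longrightarrow> i < N \<Longrightarrow> 0 \<le> l t i \<and> l t i \<le> 1"
    and w1: "w1 \<in> simplex N" "\<forall>i<N. 0 < w1 i" and eta: "0 < eta" "eta < 1"
    and u: "u \<in> simplex N"
  shows "(\<Sum>t<T. dotN N (mw N eta l w1 t) (l t)) - (\<Sum>t<T. dotN N u (l t))
           \<le> relent N u w1 / eta + real T * eta / (2 * (1 - eta))"
proof -
  define D where "D t = relent N u (mw N eta l w1 t)" for t
  define c where "c = eta\<^sup>2 / (2 * (1 - eta))"
  have w: "mw N eta l w1 t \<in> simplex N \<and> (\<forall>i<N. 0 < mw N eta l w1 t i)" if "t \<le> T" for t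
    using mw_in_simplex_pos[OF loss w1] eta that by simp
  have "D (Suc t) - D t \<le> eta * (dotN N u (l t) - dotN N (mw N eta l w1 t) (l t)) + c"
    if "t < T" for t
    unfolding D_def c_def mw_Suc
    using relent_mw_update_le[OF u] w[of t] loss[of t] eta that by simp
  then have "(\<Sum>t<T. D (Suc t) - D t)
      \<le> (\<Sum>t<T. eta * (dotN N u (l t) - dotN N (mw N eta l w1 t) (l t)) + c)"
    by (intro sum_mono) auto
  then have "D T - D 0
      \<le> eta * ((\<Sum>t<T. dotN N u (l t)) - (\<Sum>t<T. dotN N (mw N eta l w1 t) (l t))) + real T * c"
    unfolding sum_lessThan_telescope
    by (simp add: sum.distrib sum_subtractf sum_distrib_left right_diff_distrib)
  moreover have "0 \<le> D T" unfolding D_def using relent_nonneg[OF u] w[of T] by simp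
  moreover have "real T * c = eta * (real T * eta / (2 * (1 - eta)))"
    by (simp add: c_def power2_eq_square)
  ultimately have "eta * ((\<Sum>t<T. dotN N (mw N eta l w1 t) (l t)) - (\<Sum>t<T. dotN N u (l t)))
      \<le> eta * (relent N u w1 / eta + real T * eta / (2 * (1 - eta)))"
    using eta by (simp add: D_def algebra_simps)
  then show ?thesis using eta by simp
qed

lemma tuned_learning_rate_bound:
  fixes L T :: real
  assumes "0 < L" "0 < T"
  defines "eta \<equiv> sqrt (2 * L) / (sqrt (2 * L) + sqrt T)"
  shows "L / eta + T * eta / (2 * (1 - eta)) = sqrt (2 * T * L) + L"
proof -
  define a b where "a = sqrt (2 * L)" and "b = sqrt T"
  have "0 < a" "0 < b" using assms by (simp_all add: a_def b_def)
  have ab: "sqrt (2 * T * L) = a * b"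
    by (simp add: a_def b_def real_sqrt_mult[symmetric] algebra_simps)
  have L: "L = a\<^sup>2 / 2" and T: "T = b\<^sup>2"
    using assms by (simp_all add: a_def b_def)
  have "1 - a / (a + b) = b / (a + b)"
    using \<open>0 < a\<close> \<open>0 < b\<close> by (simp add: field_simps)
  then show ?thesis
    unfolding eta_def ab a_def[symmetric] b_def[symmetric] unfolding L T
    using \<open>0 < a\<close> \<open>0 < b\<close> by (simp add: divide_simps power2_eq_square) (simp add: algebra_simps)
qed

lemma mw_regret_uniform:
  assumes loss: "\<And>t i. t < T \<Longrightarrow> i < N \<Longrightarrow> 0 \<le> l t i \<and> l t i \<le> 1"
    and u: "u \<in> simplex N"
  defines "eta \<equiv> sqrt (2 * ln (real N)) / (sqrt (2 * ln (real N)) + sqrt (real T))"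
  shows "(\<Sum>t<T. dotN N (mw N eta l (\<lambda>i. 1 / real N) t) (l t)) - (\<Sum>t<T. dotN N u (l t))
           \<le> sqrt (2 * real T * ln (real N)) + ln (real N)"
proof -
  have "N \<noteq> 0" using simplex_sum[OF u] by (intro notI) simp
  then consider "N = 1" | "T = 0" | "1 < N" "0 < T" by linarith
  then show ?thesis
  proof cases
    case 1
    then have "eta = 0" by (simp add: eta_def)
    then have "mw N eta l w1 t = w1" for w1 t by (induction t) auto
    moreover have "u 0 = 1" using u 1 by (simp add: simplex_def)
    ultimately show ?thesis using 1 by (simp add: dotN_def)
  next
    case 2
    then show ?thesis using \<open>N \<noteq> 0\<close> by simp
  next
    case 3
    then have "0 < ln (real N)" by simp
    have a: "0 < sqrt (2 * ln (real N))" and b: "0 < sqrt (real T)"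
      using \<open>0 < ln (real N)\<close> 3 by simp_all
    have w1: "(\<lambda>i. 1 / real N) \<in> simplex N" "\<forall>i<N. 0 < 1 / real N"
      using \<open>N \<noteq> 0\<close> by (auto simp: simplex_def)
    have "0 < eta" unfolding eta_def using a b by (intro divide_pos_pos add_pos_pos)
    moreover have "eta < 1" unfolding eta_def using a b by (subst divide_less_eq_1_pos) linarith+
    ultimately have "(\<Sum>t<T. dotN N (mw N eta l (\<lambda>i. 1 / real N) t) (l t)) - (\<Sum>t<T. dotN N u (l t))
        \<le> relent N u (\<lambda>i. 1 / real N) / eta + real T * eta / (2 * (1 - eta))"
      using loss w1 u by (intro mw_regret_bound)
    also have "\<dots> \<le> ln (real N) / eta + real T * eta / (2 * (1 - eta))"
      using relent_uniform_le_ln[OF u] \<open>0 < eta\<close> by (simp add: divide_right_mono)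
    also have "\<dots> = sqrt (2 * real T * ln (real N)) + ln (real N)"
      unfolding eta_def using \<open>0 < ln (real N)\<close> 3 by (intro tuned_learning_rate_bound) simp_all
    finally show ?thesis .
  qed
qed

theorem theorem5p1:
  fixes N T :: nat and l :: "nat \<Rightarrow> nat \<Rightarrow> real"
  assumes loss: "\<And>t i. t < T \<Longrightarrow> i < N \<Longrightarrow> 0 \<le> l t i \<and> l t i \<le> 1"
  shows
   "(\<forall>(w1 :: nat \<Rightarrow> real) (eta :: real) u.
        w1 \<in> simplex N \<longrightarrow> (\<forall>i<N. 0 < w1 i) \<longrightarrow> 0 < eta \<longrightarrow> eta < 1 \<longrightarrow>
        u \<in> simplex N \<longrightarrow>
        (\<Sum>t<T. dotN N (mw N eta l w1 t) (l t)) - (\<Sum>t<T. dotN N u (l t))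
          \<le> relent N u w1 / eta + real T * eta / (2 * (1 - eta)))
    \<and> (let w1 = (\<lambda>i. 1 / real N);
           eta = sqrt (2 * ln (real N)) / (sqrt (2 * ln (real N)) + sqrt (real T))
       in (\<forall>u \<in> simplex N.
             (\<Sum>t<T. dotN N (mw N eta l w1 t) (l t)) - (\<Sum>t<T. dotN N u (l t))
               \<le> sqrt (2 * real T * ln (real N)) + ln (real N))
        \<and> (\<forall>j<N. (\<forall>k<N. (\<Sum>t<T. l t j) \<le> (\<Sum>t<T. l t k)) \<longrightarrow>
             (\<Sum>t<T. dotN N (mw N eta l w1 t) (l t))
               - (\<Sum>t<T. dotN N (\<lambda>i. if i = j then 1 else 0) (l t))
               \<le> sqrt (2 * real T * ln (real N)) + ln (real N)))"
proof -
  let ?eta = "sqrt (2 * ln (real N)) / (sqrt (2 * ln (real N)) + sqrt (real T))"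
  let ?alg = "\<lambda>t. dotN N (mw N ?eta l (\<lambda>i. 1 / real N) t) (l t)"
  let ?bound = "sqrt (2 * real T * ln (real N)) + ln (real N)"
  show ?thesis
    unfolding Let_def
  proof (intro conjI allI impI ballI)
    fix w1 :: "nat \<Rightarrow> real" and eta :: real and u
    assume "w1 \<in> simplex N" "\<forall>i<N. 0 < w1 i" "0 < eta" "eta < 1" "u \<in> simplex N"
    with loss show "(\<Sum>t<T. dotN N (mw N eta l w1 t) (l t)) - (\<Sum>t<T. dotN N u (l t))
        \<le> relent N u w1 / eta + real T * eta / (2 * (1 - eta))"
      by (rule mw_regret_bound)
  next
    fix u assume "u \<in> simplex N"
    with loss show "(\<Sum>t<T. ?alg t) - (\<Sum>t<T. dotN N u (l t)) \<le> ?bound"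
      by (rule mw_regret_uniform)
  next
    \<comment> \<open>The bound holds against every expert j.\<close>
    fix j assume "j < N"
    from loss unit_vector_in_simplex[OF this]
    show "(\<Sum>t<T. ?alg t) - (\<Sum>t<T. dotN N (\<lambda>i. if i = j then 1 else 0) (l t)) \<le> ?bound"
      by (rule mw_regret_uniform)
  qed
qed

end
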